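(* Let $\mathfrak{d}\geq 2$ be an integer, $c>0$, $\lambda>0$, and let $p_{\mathbf{X}_{\mathfrak{d}}}(\mathbf{x},t)$ denote the density of the absolutely continuous component of the law of the random flight $\mathbf{X}_{\mathfrak{d}}(t)$ described in the context. Define, for $t>0$ and $\mathbf{x}\in\mathbb{R}^{\mathfrak{d}}$ with $\|\mathbf{x}\|<ct$, $$f(\mathbf{x},t)=\pi^{\mathfrak{d}/2}(ct)^{\mathfrak{d}-2}\,E_{\frac{\mathfrak{d}-1}{2},\frac{\mathfrak{d}}{2},\frac{\mathfrak{d}-1}{2},\frac{\mathfrak{d}-1}{2}}\!\left(\left(\tfrac{\lambda t}{2}\right)^{\mathfrak{d}-1}\right)p_{\mathbf{X}_{\mathfrak{d}}}(\mathbf{x},t).$$ Then $$f(\mathbf{x},t)=\sum_{k=1}^{\infty}\left(\frac{\lambda}{2c}\right)^{k(\mathfrak{d}-1)}\frac{(c^2t^2-\|\mathbf{x}\|^2)^{\frac{k}{2}(\mathfrak{d}-1)-1}}{\Gamma\!\left(\frac{k}{2}(\mathfrak{d}-1)\right)\Gamma\!\left(\frac{\mathfrak{d}-1}{2}(k+1)\right)},$$ and $u=f$ solves the higher order Klein–Gordon equation $$\left(\frac{\partial^2}{\partial t^2}-c^2\Delta\right)^{\mathfrak{d}-1}u(\mathbf{x},t)=\lambda^{2(\mathfrak{d}-1)}u(\mathbf{x},t),\qquad \Delta=\sum_{j=1}^{\mathfrak{d}}\frac{\partial^2}{\partial x_j^2},$$ in the region $\{(\mathbf{x},t):t>0,\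 \|\mathbf{x}\|<ct\}$.
   Context: Random flight $\mathbf{X}_{\mathfrak{d}}(t)$ in $\mathbb{R}^{\mathfrak{d}}$: a particle starts at the origin at time $0$ and moves with constant speed $c>0$; it changes direction $\mathfrak{N}_{\mathfrak{d}}(t)$ times in $(0,t)$; the successive directions are independent and uniformly distributed on the unit sphere $S^{\mathfrak{d}-1}$. Given $\mathfrak{N}_{\mathfrak{d}}(t)=k$, the durations $\tau_1,\dots,\tau_{k+1}$ of the $k+1$ straight segments ($\tau_{k+1}=t-\sum_{j=1}^k\tau_j$) have joint density $\frac{\Gamma((k+1)(\mathfrak{d}-1))}{[\Gamma(\mathfrak{d}-1)]^{k+1}}\frac{1}{t^{(k+1)(\mathfrak{d}-1)-1}}\prod_{j=1}^{k+1}\tau_j^{\mathfrak{d}-2}$ (a Dirichlet law with parameters $(\mathfrak{d}-1,\dots,\mathfrak{d}-1)$ rescaled to total $t$), independent of the directions. The number of changes has law $P\{\mathfrak{N}_{\mathfrak{d}}(t)=k\}=\frac{1}{E_{\mathfrak{d}-1,\mathfrak{d}-1}((\lambda t)^{\mathfrak{d}-1})}\frac{(\lambda t)^{k(\mathfrak{d}-1)}}{\Gamma((k+1)(\mathfrak{d}-1))}$, $k=0,1,2,\dots$, where $E_{\alpha,\beta}(x)=\sum_{k\ge0}x^k/\Gamma(\alpha k+\beta)$. It is known that, for $k\geq1$, the conditional law of $\mathbf{X}_{\mathfrak{d}}(t)$ given $\mathfrak{N}_{\mathfrak{d}}(t)=k$ has density $p(\mathbf{x},t;k)=\frac{\Gamma(\frac{k+1}{2}(\mathfrak{d}-1)+\frac12)}{\Gamma(\frac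 k2(\mathfrak{d}-1))}\frac{(c^2t^2-\|\mathbf{x}\|^2)^{\frac k2(\mathfrak{d}-1)-1}}{\pi^{\mathfrak{d}/2}(ct)^{(k+1)(\mathfrak{d}-1)-1}}$ on $\|\mathbf{x}\|<ct$. The absolutely continuous component of the law of $\mathbf{X}_{\mathfrak{d}}(t)$ has density $p_{\mathbf{X}_{\mathfrak{d}}}(\mathbf{x},t)=\sum_{k\ge1}p(\mathbf{x},t;k)P\{\mathfrak{N}_{\mathfrak{d}}(t)=k\}$. The multi-index Mittag-Leffler function used is $E_{\frac{\mathfrak{d}-1}{2},\frac{\mathfrak{d}}{2},\frac{\mathfrak{d}-1}{2},\frac{\mathfrak{d}-1}{2}}(z)=\sum_{k=0}^\infty\frac{z^k}{\Gamma(\frac{k+1}{2}(\mathfrak{d}-1)+\frac12)\Gamma(\frac{\mathfrak{d}-1}{2}(k+1))}$. *)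

theory Defs
  imports "HOL-Analysis.Analysis"
begin

definition ML2 :: "real \<Rightarrow> real \<Rightarrow> real \<Rightarrow> real" where
  "ML2 \<alpha> \<beta> x = (\<Sum>k. x ^ k / Gamma (\<alpha> * real k + \<beta>))"

text \<open>Multi-index Mittag-Leffler function
  E_{(d-1)/2, d/2, (d-1)/2, (d-1)/2}(z) used in the paper.\<close>
definition MLd :: "nat \<Rightarrow> real \<Rightarrow> real" where
  "MLd d z = (\<Sum>k. z ^ k /
      (Gamma ((real k + 1) / 2 * (real d - 1) + 1/2) * Gamma ((real d - 1) / 2 * (real k + 1))))"

text \<open>Law of the number of direction changes N_d(t).\<close>
definition probN :: "nat \<Rightarrow> real \<Rightarrow> real \<Rightarrow> nat \<Rightarrow> real" where
  "probN d lam t k = (lam * t) ^ (k * (d - 1)) / Gamma (real ((k + 1) * (d - 1)))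
                      / ML2 (real d - 1) (real d - 1) ((lam * t) ^ (d - 1))"

text \<open>Conditional density p(x,t;k) of X_d(t) given N_d(t)=k (k \<ge> 1), on ||x|| < ct.\<close>
definition pcond :: "nat \<Rightarrow> real \<Rightarrow> real ^ 'n \<Rightarrow> real \<Rightarrow> nat \<Rightarrow> real" where
  "pcond d c x t k =
     Gamma ((real k + 1) / 2 * (real d - 1) + 1/2) / Gamma (real k / 2 * (real d - 1))
     * (c\<^sup>2 * t\<^sup>2 - (norm x)\<^sup>2) powr (real k / 2 * (real d - 1) - 1)
     / (pi powr (real d / 2) * (c * t) ^ ((k + 1) * (d - 1) - 1))"

definition pX :: "nat \<Rightarrow> real \<Rightarrow> real \<Rightarrow> real ^ 'n \<Rightarrow> real \<Rightarrow> real" where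
  "pX d c lam x t = (\<Sum>k. pcond d c x t (Suc k) * probN d lam t (Suc k))"

text \<open>Partial derivatives of u(x,t): direction None = time, Some j = x_j.\<close>
definition pd :: "'n option \<Rightarrow> (real ^ 'n \<Rightarrow> real \<Rightarrow> real) \<Rightarrow> real ^ 'n \<Rightarrow> real \<Rightarrow> real" where
  "pd dir u x t = (case dir of
       None \<Rightarrow> deriv (\<lambda>s. u x s) t
     | Some j \<Rightarrow> deriv (\<lambda>s. u (x + s *\<^sub>R axis j 1) t) 0)"

definition pdiff :: "'n option \<Rightarrow> (real ^ 'n \<Rightarrow> real \<Rightarrow> real) \<Rightarrow> real ^ 'n \<Rightarrow> real \<Rightarrow> bool" where
  "pdiff dir u x t = (case dir of
       None \<Rightarrow> (\<lambda>s. u x s) differentiable (at t)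
     | Some j \<Rightarrow> (\<lambda>s. u (x + s *\<^sub>R axis j 1) t) differentiable (at 0))"

definition KG :: "real \<Rightarrow> (real ^ 'n \<Rightarrow> real \<Rightarrow> real) \<Rightarrow> real ^ 'n \<Rightarrow> real \<Rightarrow> real" where
  "KG c u x t = pd None (pd None u) x t - c\<^sup>2 * (\<Sum>j\<in>UNIV. pd (Some j) (pd (Some j) u) x t)"

end

theory Submission
  imports Defs
begin

text \<open>Write \<open>N = d - 1\<close> and, inside the cone, \<open>Y = sqrt (c\<^sup>2t\<^sup>2 - |x|\<^sup>2)\<close>. The Legendre
  duplication formula turns every summand of the density into a monomial in \<open>Y\<close>, so that
  \<open>f = P(Y) / Y\<^sup>2\<close> with the entire series \<open>P(Y) = \<Sum>\<^sub>j a\<^sub>j Y\<^sup>j\<^sup>N\<close>,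
  \<open>a\<^sub>j = (\<lambda>/2c)\<^sup>j\<^sup>N / (\<Gamma>(jN/2) \<Gamma>((j+1)N/2))\<close>.
  On functions \<open>P(Y) / Y\<^sup>J\<close> the operator \<open>\<partial>\<^sub>t\<^sup>2 - c\<^sup>2\<Delta>\<close> acts diagonally on the coefficients,
  sending \<open>Y\<^sup>n\<^sup>-\<^sup>J\<close> to \<open>c\<^sup>2(n-J)(n-J+d-1) Y\<^sup>n\<^sup>-\<^sup>J\<^sup>-\<^sup>2\<close>. After \<open>N\<close> iterations the coefficient
  \<open>a\<^sub>j\<close> has picked up two Pochhammer symbols of length \<open>N\<close>, which lower both Gamma arguments
  by \<open>N\<close>: it becomes \<open>\<lambda>\<^sup>2\<^sup>N a\<^sub>j\<^sub>-\<^sub>2\<close>, so the series is reproduced up to the factor \<open>\<lambda>\<^sup>2\<^sup>N\<close>.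
  Smoothness holds because the functions \<open>P(Y) / Y\<^sup>J\<close>, multiplied by polynomials in \<open>t\<close>
  and \<open>x\<close>, form an algebra that is closed under partial derivatives inside the cone.\<close>

section \<open>Gamma function and a ratio test\<close>

lemma Gamma_legendre_duplication_real:
  fixes x :: real assumes "x > 0"
  shows "Gamma x * Gamma (x + 1/2) = 2 powr (1 - 2*x) * sqrt pi * Gamma (2*x)"
proof -
  have n1: "complex_of_real x \<notin> \<int>\<^sub>\<le>\<^sub>0" using assms
    by (auto simp: of_real_in_nonpos_Ints_iff elim!: nonpos_Ints_cases)
  have e2: "complex_of_real x + 1/2 = complex_of_real (x + 1/2)" by simp
  have "x + 1/2 \<notin> \<int>\<^sub>\<le>\<^sub>0" using assms nonpos_Ints_nonpos by fastforce
  then have n2: "complex_of_real x + 1/2 \<notin> \<int>\<^sub>\<le>\<^sub>0"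
    unfolding e2 by (simp only: of_real_in_nonpos_Ints_iff not_False_eq_True)
  have exp2: "exp ((1 - 2*complex_of_real x) * of_real (ln 2)) = complex_of_real (2 powr (1 - 2*x))"
  proof -
    have "(1 - 2*complex_of_real x) * of_real (ln 2) = complex_of_real ((1 - 2*x) * ln 2)" by simp
    then show ?thesis by (simp only: exp_of_real) (simp add: powr_def mult.commute)
  qed
  have "Gamma (2*complex_of_real x) = complex_of_real (Gamma (2*x))"
    using Gamma_complex_of_real[of "2*x"] by simp
  then have "complex_of_real (Gamma x * Gamma (x + 1/2)) =
      complex_of_real (2 powr (1 - 2*x) * sqrt pi * Gamma (2*x))"
    using Gamma_legendre_duplication[OF n1 n2]
    unfolding e2 exp2 Gamma_complex_of_real by simp
  then show ?thesis using of_real_eq_iff by blast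
qed

lemma Gamma_half_nat_duplication:
  assumes "M \<ge> 1"
  shows "Gamma (real M / 2 + 1/2) * Gamma (real M / 2) = sqrt pi * Gamma (real M) / 2 ^ (M - 1)"
proof -
  have "(2::real) ^ (M - 1) = 2 powr (real M - 1)"
    using assms by (simp add: powr_realpow[symmetric] of_nat_diff)
  then have "2 powr (1 - real M) * (2::real) ^ (M - 1) = 1"
    by (simp add: powr_add[symmetric])
  moreover have "Gamma (real M / 2) * Gamma (real M / 2 + 1/2) = 2 powr (1 - real M) * sqrt pi * Gamma (real M)"
    using Gamma_legendre_duplication_real[of "real M / 2"] assms by simp
  ultimately show ?thesis by (simp add: field_simps)
qed

lemma pochhammer_ge_self:
  fixes a :: real
  assumes "a \<ge> 1" "n \<ge> 1"
  shows "pochhammer a n \<ge> a"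
proof -
  have "pochhammer (a + 1) m \<ge> 1" for m
  proof (induction m)
    case (Suc m)
    then have "1 * 1 \<le> pochhammer (a + 1) m * (a + 1 + real m)"
      using assms(1) by (intro mult_mono) auto
    then show ?case by (simp add: pochhammer_Suc)
  qed simp
  moreover obtain m where "n = Suc m" using assms(2) by (cases n) auto
  ultimately show ?thesis using assms(1) by (simp add: pochhammer_rec mult_le_cancel_left1)
qed

lemma summable_pow_mult_pochhammer_ratio:
  fixes Z :: real and g R :: "nat \<Rightarrow> real"
  assumes N: "N \<ge> 1" and g: "\<And>k. g k \<ge> real k / 2"
    and R: "\<And>k. R k > 0" "\<And>k. R k = pochhammer (g k) N * R (Suc k)"
  shows "summable (\<lambda>k. Z ^ k * R k)"
proof (rule summable_ratio_test[where c = "1/2" and N = "nat \<lceil>4 * \<bar>Z\<bar>\<rceil> + 2"])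
  fix k assume k: "k \<ge> nat \<lceil>4 * \<bar>Z\<bar>\<rceil> + 2"
  have gk: "g k \<ge> 2 * \<bar>Z\<bar>" "g k \<ge> 1" using g[of k] k by linarith+
  have P: "pochhammer (g k) N \<ge> g k" using pochhammer_ge_self[OF gk(2) N] .
  have "norm (Z ^ Suc k * R (Suc k)) = \<bar>Z\<bar> / pochhammer (g k) N * norm (Z ^ k * R k)"
    using R[of k] R(1)[of "Suc k"] P gk by (simp add: abs_mult power_abs)
  also have "\<dots> \<le> 1/2 * norm (Z ^ k * R k)"
    using P gk by (intro mult_right_mono) (simp_all add: divide_simps)
  finally show "norm (Z ^ Suc k * R (Suc k)) \<le> 1/2 * norm (Z ^ k * R k)" .
qed simp

section \<open>Entire power series\<close>

definition entire_coeffs :: "(nat \<Rightarrow> real) \<Rightarrow> bool" where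
  "entire_coeffs b \<longleftrightarrow> (\<forall>y. summable (\<lambda>n. b n * y ^ n))"

definition pseries :: "(nat \<Rightarrow> real) \<Rightarrow> real \<Rightarrow> real" where
  "pseries b y = (\<Sum>n. b n * y ^ n)"

text \<open>If \<open>P = pseries b\<close>, then \<open>pseries (euler_coeffs J b)\<close> is
  \<open>y\<^sup>J\<^sup>+\<^sup>1 (d/dy) (P(y) / y\<^sup>J) = y P'(y) - J P(y)\<close>.\<close>
definition euler_coeffs :: "nat \<Rightarrow> (nat \<Rightarrow> real) \<Rightarrow> nat \<Rightarrow> real" where
  "euler_coeffs J b n = (real n - real J) * b n"

lemma sums_pseries: "entire_coeffs b \<Longrightarrow> (\<lambda>n. b n * y ^ n) sums pseries b y"
  unfolding entire_coeffs_def pseries_def by (simp add: summable_sums)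

lemma sums_pseries_lincomb:
  assumes "entire_coeffs b" "entire_coeffs e"
  shows "(\<lambda>n. (a * b n + e n) * y ^ n) sums (a * pseries b y + pseries e y)"
proof -
  have "(\<lambda>n. a * (b n * y ^ n) + e n * y ^ n) sums (a * pseries b y + pseries e y)"
    by (intro sums_add sums_mult sums_pseries assms)
  then show ?thesis by (simp add: algebra_simps)
qed

lemma entire_coeffs_lincomb:
  "entire_coeffs b \<Longrightarrow> entire_coeffs e \<Longrightarrow> entire_coeffs (\<lambda>n. a * b n + e n)"
  unfolding entire_coeffs_def[of "\<lambda>n. a * b n + e n"]
  using sums_pseries_lincomb sums_summable by blast

lemma pseries_lincomb:
  "entire_coeffs b \<Longrightarrow> entire_coeffs e \<Longrightarrow> pseries (\<lambda>n. a * b n + e n) y = a * pseries b y + pseries e y"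
  unfolding pseries_def[of "\<lambda>n. a * b n + e n"] using sums_pseries_lincomb sums_unique by metis

lemma entire_coeffs_zero: "entire_coeffs (\<lambda>n. 0)"
  by (simp add: entire_coeffs_def)

lemma entire_coeffs_scale: "entire_coeffs b \<Longrightarrow> entire_coeffs (\<lambda>n. a * b n)"
  using entire_coeffs_lincomb[OF _ entire_coeffs_zero] by simp

lemma pseries_scale: "entire_coeffs b \<Longrightarrow> pseries (\<lambda>n. a * b n) y = a * pseries b y"
  using pseries_lincomb[OF _ entire_coeffs_zero] by (simp add: pseries_def)

lemma sums_pseries_euler_coeffs:
  assumes b: "entire_coeffs b"
  shows "(\<lambda>n. euler_coeffs J b n * y ^ n) sums (y * (\<Sum>n. diffs b n * y ^ n) - real J * pseries b y)"
proof -
  have "summable (\<lambda>n. diffs b n * y ^ n)"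
    using b unfolding entire_coeffs_def by (intro termdiff_converges_all) auto
  then have "(\<lambda>n. y * (diffs b n * y ^ n)) sums (y * (\<Sum>n. diffs b n * y ^ n))"
    by (intro sums_mult summable_sums)
  moreover have "(\<lambda>n. y * (diffs b n * y ^ n)) = (\<lambda>n. real (Suc n) * b (Suc n) * y ^ Suc n)"
    by (simp add: diffs_def algebra_simps)
  ultimately have "(\<lambda>n. real n * b n * y ^ n) sums (y * (\<Sum>n. diffs b n * y ^ n))"
    using sums_Suc_iff[of "\<lambda>n. real n * b n * y ^ n"] by simp
  from sums_diff[OF this sums_mult[OF sums_pseries[OF b], of "real J"]] show ?thesis
    by (simp add: euler_coeffs_def algebra_simps)
qed

lemma entire_coeffs_euler_coeffs: "entire_coeffs b \<Longrightarrow> entire_coeffs (euler_coeffs J b)"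
  unfolding entire_coeffs_def[of "euler_coeffs J b"] using sums_pseries_euler_coeffs sums_summable by blast

lemma DERIV_pseries_div_power:
  assumes b: "entire_coeffs b" and y: "y > 0"
  shows "((\<lambda>y. pseries b y / y ^ J) has_real_derivative pseries (euler_coeffs J b) y / y ^ Suc J) (at y)"
proof -
  define S where "S = (\<Sum>n. diffs b n * y ^ n)"
  have "(pseries b has_real_derivative S) (at y)"
    unfolding pseries_def S_def using b unfolding entire_coeffs_def
    by (intro termdiffs_strong_converges_everywhere) auto
  from DERIV_divide[OF this DERIV_pow[of J y]]
  have "((\<lambda>y. pseries b y / y ^ J) has_real_derivative
      (S * y ^ J - pseries b y * (real J * y ^ (J - 1))) / (y ^ J * y ^ J)) (at y)"
    using y by simp
  moreover have "(S * y ^ J - P * (real J * y ^ (J - 1))) / (y ^ J * y ^ J)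
      = (y * S - real J * P) / y ^ Suc J" for P
  proof (cases J)
    case (Suc K)
    have "y ^ K * (y * S - real J * P) / (y ^ K * y ^ Suc J) = (y * S - real J * P) / y ^ Suc J"
      using y by simp
    then show ?thesis by (simp add: Suc algebra_simps)
  qed (use y in simp)
  moreover have "pseries (euler_coeffs J b) y = y * S - real J * pseries b y"
    unfolding S_def pseries_def[of "euler_coeffs J b"] using sums_pseries_euler_coeffs[OF b] by (rule sums_unique[symmetric])
  ultimately show ?thesis by simp
qed

lemma pseries_shift:
  assumes b: "entire_coeffs b"
  shows "pseries (\<lambda>n. if K \<le> n then a * b (n - K) else 0) y = a * y ^ K * pseries b y"
proof -
  define f where "f = (\<lambda>n. (if K \<le> n then a * b (n - K) else 0) * y ^ n)"
  have "(\<lambda>n. f (n + K)) = (\<lambda>n. a * y ^ K * (b n * y ^ n))"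
    by (simp add: f_def power_add algebra_simps)
  then have "(\<lambda>n. f (n + K)) sums (a * y ^ K * pseries b y)"
    by (simp add: sums_mult sums_pseries b)
  moreover have "(\<Sum>n<K. f n) = 0" by (simp add: f_def)
  ultimately have "f sums (a * y ^ K * pseries b y)" by (simp add: sums_iff_shift)
  then show ?thesis unfolding pseries_def f_def by (rule sums_unique[symmetric])
qed

section \<open>Functions of the cone radius\<close>

definition in_cone :: "real \<Rightarrow> real ^ 'n \<Rightarrow> real \<Rightarrow> bool" where
  "in_cone c x t \<longleftrightarrow> t > 0 \<and> norm x < c * t"

definition cone_radius :: "real \<Rightarrow> real ^ 'n \<Rightarrow> real \<Rightarrow> real" where
  "cone_radius c x t = sqrt (c\<^sup>2 * t\<^sup>2 - (norm x)\<^sup>2)"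

definition cone_fun :: "real \<Rightarrow> (nat \<Rightarrow> real) \<Rightarrow> nat \<Rightarrow> real ^ 'n \<Rightarrow> real \<Rightarrow> real" where
  "cone_fun c b J x t = pseries b (cone_radius c x t) / cone_radius c x t ^ J"

lemma in_cone_radicand_pos:
  assumes "c > 0" "in_cone c x t"
  shows "c\<^sup>2 * t\<^sup>2 - (norm x)\<^sup>2 > 0"
proof -
  have "(norm x)\<^sup>2 < (c * t)\<^sup>2"
    using assms by (intro power_strict_mono) (auto simp: in_cone_def)
  then show ?thesis by (simp add: power_mult_distrib)
qed

lemma cone_radius_pos: "c > 0 \<Longrightarrow> in_cone c x t \<Longrightarrow> cone_radius c x t > 0"
  using in_cone_radicand_pos[of c x t] by (simp add: cone_radius_def)

lemma cone_radius_sq: "c > 0 \<Longrightarrow> in_cone c x t \<Longrightarrow> (cone_radius c x t)\<^sup>2 = c\<^sup>2 * t\<^sup>2 - (norm x)\<^sup>2"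
  using in_cone_radicand_pos[of c x t] by (simp add: cone_radius_def)

lemma norm_add_scaleR_axis_sq:
  fixes x :: "real ^ 'n"
  shows "(norm (x + s *\<^sub>R axis j 1))\<^sup>2 = (norm x)\<^sup>2 + 2 * s * x $ j + s\<^sup>2"
proof -
  have "(norm (x + s *\<^sub>R axis j 1))\<^sup>2 = x \<bullet> x + 2 * s * (x \<bullet> axis j 1) + s * s * (axis j 1 \<bullet> axis j (1::real))"
    by (simp add: power2_norm_eq_inner inner_add_left inner_add_right inner_commute algebra_simps)
  then show ?thesis by (simp add: inner_axis inner_axis_axis dot_square_norm power2_eq_square)
qed

lemma DERIV_cone_radius_time:
  assumes "c > 0" "in_cone c x t"
  shows "((\<lambda>s. cone_radius c x s) has_real_derivative c\<^sup>2 * t / cone_radius c x t) (at t)"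
proof -
  have "((\<lambda>s. c\<^sup>2 * s\<^sup>2 - (norm x)\<^sup>2) has_real_derivative c\<^sup>2 * (2 * t)) (at t)"
    by (auto intro!: derivative_eq_intros)
  from DERIV_chain2[OF DERIV_real_sqrt[OF in_cone_radicand_pos[OF assms]] this]
  show ?thesis unfolding cone_radius_def by (simp add: field_simps)
qed

lemma DERIV_cone_radius_space:
  assumes "c > 0" "in_cone c x t"
  shows "((\<lambda>s. cone_radius c (x + s *\<^sub>R axis j 1) t) has_real_derivative - x $ j / cone_radius c x t) (at 0)"
proof -
  have "((\<lambda>s. c\<^sup>2 * t\<^sup>2 - ((norm x)\<^sup>2 + 2 * s * x $ j + s\<^sup>2)) has_real_derivative - (2 * x $ j)) (at 0)"
    by (auto intro!: derivative_eq_intros)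
  moreover have "(sqrt has_real_derivative inverse (sqrt (c\<^sup>2 * t\<^sup>2 - (norm x)\<^sup>2)) / 2)
      (at (c\<^sup>2 * t\<^sup>2 - ((norm x)\<^sup>2 + 2 * 0 * x $ j + 0\<^sup>2)))"
    using DERIV_real_sqrt[OF in_cone_radicand_pos[OF assms]] by simp
  ultimately have "((\<lambda>s. sqrt (c\<^sup>2 * t\<^sup>2 - ((norm x)\<^sup>2 + 2 * s * x $ j + s\<^sup>2))) has_real_derivative
      inverse (sqrt (c\<^sup>2 * t\<^sup>2 - (norm x)\<^sup>2)) / 2 * - (2 * x $ j)) (at 0)"
    by (rule DERIV_chain2[rotated])
  then show ?thesis unfolding cone_radius_def norm_add_scaleR_axis_sq by (simp add: field_simps)
qed

lemma DERIV_cone_fun_time: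
  assumes c: "c > 0" and x: "in_cone c x t" and b: "entire_coeffs b"
  shows "((\<lambda>s. cone_fun c b J x s) has_real_derivative c\<^sup>2 * t * cone_fun c (euler_coeffs J b) (J + 2) x t) (at t)"
proof -
  have Y: "cone_radius c x t > 0" by (rule cone_radius_pos[OF c x])
  from DERIV_chain2[OF DERIV_pseries_div_power[OF b Y] DERIV_cone_radius_time[OF c x]]
  show ?thesis using Y unfolding cone_fun_def by (simp add: field_simps)
qed

lemma DERIV_cone_fun_space:
  assumes c: "c > 0" and x: "in_cone c x t" and b: "entire_coeffs b"
  shows "((\<lambda>s. cone_fun c b J (x + s *\<^sub>R axis j 1) t) has_real_derivative
      - x $ j * cone_fun c (euler_coeffs J b) (J + 2) x t) (at 0)"
proof -
  have Y: "cone_radius c (x + 0 *\<^sub>R axis j 1) t > 0" using cone_radius_pos[OF c x] by simp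
  from DERIV_chain2[OF DERIV_pseries_div_power[OF b Y] DERIV_cone_radius_space[OF c x, of j]]
  show ?thesis using Y unfolding cone_fun_def by (simp add: field_simps)
qed

section \<open>Partial derivatives inside the cone\<close>

definition eq_on_cone :: "real \<Rightarrow> (real ^ 'n \<Rightarrow> real \<Rightarrow> real) \<Rightarrow> (real ^ 'n \<Rightarrow> real \<Rightarrow> real) \<Rightarrow> bool" where
  "eq_on_cone c u v \<longleftrightarrow> (\<forall>x t. in_cone c x t \<longrightarrow> u x t = v x t)"

lemma eventually_in_cone_time:
  assumes "in_cone c x t"
  shows "eventually (\<lambda>s. in_cone c x s) (nhds t)"
proof -
  have "open {s::real. 0 < s \<and> norm x < c * s}"
    by (intro open_Collect_conj open_Collect_less continuous_intros)
  from eventually_nhds_in_open[OF this] assms show ?thesis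
    by (simp add: in_cone_def)
qed

lemma eventually_in_cone_space:
  fixes x :: "real ^ 'n"
  assumes "in_cone c x t"
  shows "eventually (\<lambda>s. in_cone c (x + s *\<^sub>R axis j 1) t) (nhds 0)"
proof -
  have "open {s::real. norm (x + s *\<^sub>R axis j 1) < c * t}"
    by (intro open_Collect_less continuous_intros)
  from eventually_nhds_in_open[OF this] assms show ?thesis
    by (simp add: in_cone_def)
qed

lemma deriv_differentiable_cong_ev:
  fixes g h :: "real \<Rightarrow> real"
  assumes "eventually (\<lambda>s. g s = h s) (nhds a)"
  shows "deriv g a = deriv h a \<and> (g differentiable at a \<longleftrightarrow> h differentiable at a)"
proof -
  have "eventually (\<lambda>s. s \<in> UNIV \<longrightarrow> g s = h s) (nhds a)"
    using assms by (rule eventually_mono) simp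
  from has_field_derivative_cong_ev[OF refl this refl refl]
  show ?thesis using deriv_cong_ev[OF assms refl] by (simp add: real_differentiable_def)
qed

lemma pd_pdiff_cong_on_cone:
  assumes uv: "eq_on_cone c u v" and x: "in_cone c x t"
  shows "pd dir u x t = pd dir v x t \<and> (pdiff dir u x t \<longleftrightarrow> pdiff dir v x t)"
proof (cases dir)
  case None
  have "eventually (\<lambda>s. u x s = v x s) (nhds t)"
    using eventually_in_cone_time[OF x] by eventually_elim (use uv in \<open>simp add: eq_on_cone_def\<close>)
  from deriv_differentiable_cong_ev[OF this] show ?thesis
    unfolding None pd_def pdiff_def by simp
next
  case (Some j)
  have "eventually (\<lambda>s. u (x + s *\<^sub>R axis j 1) t = v (x + s *\<^sub>R axis j 1) t) (nhds 0)"
    using eventually_in_cone_space[OF x, of j] by eventually_elim (use uv in \<open>simp add: eq_on_cone_def\<close>)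
  from deriv_differentiable_cong_ev[OF this] show ?thesis
    unfolding Some pd_def pdiff_def by simp
qed

lemma eq_on_cone_pd: "eq_on_cone c u v \<Longrightarrow> eq_on_cone c (pd dir u) (pd dir v)"
  using pd_pdiff_cong_on_cone unfolding eq_on_cone_def[of c "pd dir u"] by blast

lemma eq_on_cone_KG: "eq_on_cone c u v \<Longrightarrow> eq_on_cone c (KG c u) (KG c v)"
proof -
  assume "eq_on_cone c u v"
  then have "eq_on_cone c (pd dir (pd dir u)) (pd dir (pd dir v))" for dir
    by (intro eq_on_cone_pd)
  then show ?thesis unfolding eq_on_cone_def KG_def by simp
qed

lemma eq_on_cone_KG_pow: "eq_on_cone c u v \<Longrightarrow> eq_on_cone c ((KG c ^^ n) u) ((KG c ^^ n) v)"
  by (induction n) (simp_all add: eq_on_cone_KG)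

text \<open>Only needed to show that all iterated partial derivatives of \<open>f\<close> exist: the algebra is
  closed under partial differentiation inside the cone.\<close>
inductive_set cone_algebra :: "real \<Rightarrow> (real ^ 'n \<Rightarrow> real \<Rightarrow> real) set" for c where
  cone_fun: "entire_coeffs b \<Longrightarrow> cone_fun c b J \<in> cone_algebra c"
| add: "u \<in> cone_algebra c \<Longrightarrow> v \<in> cone_algebra c \<Longrightarrow> (\<lambda>x t. u x t + v x t) \<in> cone_algebra c"
| scale: "u \<in> cone_algebra c \<Longrightarrow> (\<lambda>x t. a * u x t) \<in> cone_algebra c"
| mult_time: "u \<in> cone_algebra c \<Longrightarrow> (\<lambda>x t. t * u x t) \<in> cone_algebra c"
| mult_coord: "u \<in> cone_algebra c \<Longrightarrow> (\<lambda>x t. x $ i * u x t) \<in> cone_algebra c"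

definition has_pd :: "'n option \<Rightarrow> (real ^ 'n \<Rightarrow> real \<Rightarrow> real) \<Rightarrow> (real ^ 'n \<Rightarrow> real \<Rightarrow> real) \<Rightarrow> real ^ 'n \<Rightarrow> real \<Rightarrow> bool" where
  "has_pd dir u v x t = (case dir of
       None \<Rightarrow> ((\<lambda>s. u x s) has_real_derivative v x t) (at t)
     | Some j \<Rightarrow> ((\<lambda>s. u (x + s *\<^sub>R axis j 1) t) has_real_derivative v x t) (at 0))"

lemma has_pd_imp_pd_pdiff: "has_pd dir u v x t \<Longrightarrow> pd dir u x t = v x t \<and> pdiff dir u x t"
  unfolding has_pd_def pd_def pdiff_def
  by (cases dir) (auto intro: DERIV_imp_deriv simp: real_differentiable_def)

lemma has_pd_add:
  "has_pd dir u du x t \<Longrightarrow> has_pd dir v dv x t \<Longrightarrow>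
    has_pd dir (\<lambda>x t. u x t + v x t) (\<lambda>x t. du x t + dv x t) x t"
  unfolding has_pd_def by (cases dir) (auto intro!: DERIV_add)

lemma has_pd_scale: "has_pd dir u du x t \<Longrightarrow> has_pd dir (\<lambda>x t. a * u x t) (\<lambda>x t. a * du x t) x t"
  unfolding has_pd_def by (cases dir) (auto intro!: DERIV_cmult)

lemma has_pd_mult_time:
  "has_pd dir u du x t \<Longrightarrow>
    has_pd dir (\<lambda>x t. t * u x t) (\<lambda>x t. (if dir = None then u x t else 0) + t * du x t) x t"
proof (cases dir)
  case None
  assume "has_pd dir u du x t"
  then have "((\<lambda>s. u x s) has_real_derivative du x t) (at t)"
    unfolding has_pd_def None by simp
  from DERIV_mult[OF DERIV_ident this] show ?thesis
    unfolding has_pd_def None by (simp add: mult.commute)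
qed (auto simp: has_pd_def intro!: DERIV_cmult)

lemma has_pd_mult_coord:
  fixes x :: "real ^ 'n"
  assumes "has_pd dir u du x t"
  shows "has_pd dir (\<lambda>x t. x $ i * u x t)
    (\<lambda>x t. (case dir of None \<Rightarrow> 0 | Some j \<Rightarrow> axis j 1 $ i) * u x t + x $ i * du x t) x t"
proof (cases dir)
  case None
  then show ?thesis using assms unfolding has_pd_def by (auto intro!: DERIV_cmult)
next
  case (Some j)
  have "((\<lambda>s. (x + s *\<^sub>R axis j 1) $ i) has_real_derivative axis j 1 $ i) (at 0)"
    by (auto intro!: derivative_eq_intros)
  moreover have "((\<lambda>s. u (x + s *\<^sub>R axis j 1) t) has_real_derivative du x t) (at 0)"
    using assms unfolding has_pd_def Some by simp
  ultimately have "((\<lambda>s. (x + s *\<^sub>R axis j 1) $ i * u (x + s *\<^sub>R axis j 1) t) has_real_derivative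
      axis j 1 $ i * u (x + 0 *\<^sub>R axis j 1) t + du x t * (x + 0 *\<^sub>R axis j 1) $ i) (at 0)"
    by (rule DERIV_mult)
  then show ?thesis
    unfolding has_pd_def Some by (simp add: mult.commute)
qed

lemma cone_algebra_has_pd:
  assumes c: "c > 0" and u: "u \<in> cone_algebra c"
  shows "\<exists>v \<in> cone_algebra c. \<forall>x t. in_cone c x t \<longrightarrow> has_pd dir u v x t"
  using u
proof induction
  case (cone_fun b J)
  let ?v = "\<lambda>x t. (case dir of None \<Rightarrow> c\<^sup>2 * t | Some j \<Rightarrow> - x $ j) * cone_fun c (euler_coeffs J b) (J + 2) x t"
  have "?v \<in> cone_algebra c"
  proof (cases dir)
    case (Some j)
    have "(\<lambda>x t. (- 1) * (x $ j * cone_fun c (euler_coeffs J b) (J + 2) x t)) \<in> cone_algebra c"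
      using cone_fun by (intro cone_algebra.intros entire_coeffs_euler_coeffs)
    then show ?thesis using Some by simp
  qed (use cone_fun in \<open>auto intro!: cone_algebra.intros entire_coeffs_euler_coeffs simp: mult.assoc\<close>)
  moreover have "\<forall>x t. in_cone c x t \<longrightarrow> has_pd dir (cone_fun c b J) ?v x t"
    using DERIV_cone_fun_time[OF c _ cone_fun] DERIV_cone_fun_space[OF c _ cone_fun]
    unfolding has_pd_def by (cases dir) auto
  ultimately show ?case by blast
next
  case (add u v)
  then obtain du dv where "du \<in> cone_algebra c" "\<forall>x t. in_cone c x t \<longrightarrow> has_pd dir u du x t"
    and "dv \<in> cone_algebra c" "\<forall>x t. in_cone c x t \<longrightarrow> has_pd dir v dv x t" by blast
  then show ?case by (blast intro: has_pd_add cone_algebra.add)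
next
  case (scale u a)
  then obtain du where "du \<in> cone_algebra c" "\<forall>x t. in_cone c x t \<longrightarrow> has_pd dir u du x t" by blast
  then show ?case by (blast intro: has_pd_scale cone_algebra.scale)
next
  case (mult_time u)
  then obtain du where "du \<in> cone_algebra c" "\<forall>x t. in_cone c x t \<longrightarrow> has_pd dir u du x t" by blast
  moreover have "(\<lambda>x t. (if dir = None then u x t else 0) + t * du x t) \<in> cone_algebra c"
    using mult_time calculation by (cases dir) (auto intro: cone_algebra.intros)
  ultimately show ?case using has_pd_mult_time by blast
next
  case (mult_coord u i)
  then obtain du where "du \<in> cone_algebra c" "\<forall>x t. in_cone c x t \<longrightarrow> has_pd dir u du x t" by blast
  moreover have "(\<lambda>x t. (case dir of None \<Rightarrow> 0 | Some j \<Rightarrow> axis j 1 $ i) * u x t + x $ i * du x t) \<in> cone_algebra c"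
    using mult_coord calculation by (auto intro: cone_algebra.intros)
  ultimately show ?case using has_pd_mult_coord by blast
qed

lemma eq_on_cone_iterated_pd:
  assumes c: "c > 0" and w: "w \<in> cone_algebra c" and fw: "eq_on_cone c f w"
  shows "\<exists>w' \<in> cone_algebra c. eq_on_cone c (foldr pd ds f) w'"
proof (induction ds)
  case (Cons dir ds)
  then obtain w' where w': "w' \<in> cone_algebra c" "eq_on_cone c (foldr pd ds f) w'" by blast
  obtain v where v: "v \<in> cone_algebra c" "\<forall>x t. in_cone c x t \<longrightarrow> has_pd dir w' v x t"
    using cone_algebra_has_pd[OF c w'(1)] by blast
  have "eq_on_cone c (pd dir (foldr pd ds f)) (pd dir w')"
    using eq_on_cone_pd[OF w'(2)] .
  with v(2) have "eq_on_cone c (pd dir (foldr pd ds f)) v"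
    unfolding eq_on_cone_def using has_pd_imp_pd_pdiff by metis
  then show ?case using v(1) by auto
qed (use w fw in auto)

lemma pdiff_iterated_pd:
  assumes c: "c > 0" and w: "w \<in> cone_algebra c" and fw: "eq_on_cone c f w" and x: "in_cone c x t"
  shows "pdiff dir (foldr pd ds f) x t"
proof -
  obtain w' where w': "w' \<in> cone_algebra c" "eq_on_cone c (foldr pd ds f) w'"
    using eq_on_cone_iterated_pd[OF c w fw] by blast
  obtain v where "\<forall>x t. in_cone c x t \<longrightarrow> has_pd dir w' v x t"
    using cone_algebra_has_pd[OF c w'(1)] by blast
  then show ?thesis
    using has_pd_imp_pd_pdiff pd_pdiff_cong_on_cone[OF w'(2) x] x by blast
qed

section \<open>The Klein--Gordon operator on functions of the cone radius\<close>

lemma pd_time_cone_fun: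
  assumes c: "c > 0" and b: "entire_coeffs b"
  shows "eq_on_cone c (pd None (cone_fun c b J)) (\<lambda>x t. c\<^sup>2 * (t * cone_fun c (euler_coeffs J b) (J + 2) x t))"
  unfolding eq_on_cone_def pd_def option.case
proof (intro allI impI)
  fix x :: "real ^ 'n" and t assume "in_cone c x t"
  from DERIV_imp_deriv[OF DERIV_cone_fun_time[OF c this b]]
  show "deriv (cone_fun c b J x) t = c\<^sup>2 * (t * cone_fun c (euler_coeffs J b) (J + 2) x t)"
    by (simp add: mult.assoc)
qed

lemma pd_space_cone_fun:
  fixes j :: "'n::finite"
  assumes c: "c > 0" and b: "entire_coeffs b"
  shows "eq_on_cone c (pd (Some j) (cone_fun c b J)) (\<lambda>x t. - (x $ j * cone_fun c (euler_coeffs J b) (J + 2) x t))"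
  unfolding eq_on_cone_def pd_def option.case
proof (intro allI impI)
  fix x :: "real ^ 'n" and t assume "in_cone c x t"
  from DERIV_imp_deriv[OF DERIV_cone_fun_space[OF c this b]]
  show "deriv (\<lambda>s. cone_fun c b J (x + s *\<^sub>R axis j 1) t) 0 = - (x $ j * cone_fun c (euler_coeffs J b) (J + 2) x t)"
    by simp
qed

lemma pd_time_time_cone_fun:
  assumes c: "c > 0" and b: "entire_coeffs b" and x: "in_cone c x t"
  shows "pd None (pd None (cone_fun c b J)) x t =
     c\<^sup>2 * cone_fun c (euler_coeffs J b) (J + 2) x t
     + c\<^sup>2 * c\<^sup>2 * t\<^sup>2 * cone_fun c (euler_coeffs (J + 2) (euler_coeffs J b)) (J + 2 + 2) x t"
proof -
  have "pd None (pd None (cone_fun c b J)) x t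
      = pd None (\<lambda>x t. c\<^sup>2 * (t * cone_fun c (euler_coeffs J b) (J + 2) x t)) x t"
    using pd_pdiff_cong_on_cone[OF pd_time_cone_fun[OF c b] x] by simp
  also have "\<dots> = c\<^sup>2 * (1 * cone_fun c (euler_coeffs J b) (J + 2) x t
      + c\<^sup>2 * t * cone_fun c (euler_coeffs (J + 2) (euler_coeffs J b)) (J + 2 + 2) x t * t)"
    unfolding pd_def option.case
    by (intro DERIV_imp_deriv DERIV_cmult DERIV_mult DERIV_ident
        DERIV_cone_fun_time[OF c x] entire_coeffs_euler_coeffs b)
  finally show ?thesis by (simp add: algebra_simps power2_eq_square)
qed

lemma pd_space_space_cone_fun:
  fixes x :: "real ^ 'n"
  assumes c: "c > 0" and b: "entire_coeffs b" and x: "in_cone c x t"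
  shows "pd (Some j) (pd (Some j) (cone_fun c b J)) x t =
     - cone_fun c (euler_coeffs J b) (J + 2) x t
     + (x $ j)\<^sup>2 * cone_fun c (euler_coeffs (J + 2) (euler_coeffs J b)) (J + 2 + 2) x t"
proof -
  have "pd (Some j) (pd (Some j) (cone_fun c b J)) x t
      = pd (Some j) (\<lambda>x t. - (x $ j * cone_fun c (euler_coeffs J b) (J + 2) x t)) x t"
    using pd_pdiff_cong_on_cone[OF pd_space_cone_fun[OF c b] x] by simp
  also have "\<dots> = - (1 * cone_fun c (euler_coeffs J b) (J + 2) x t
      + - x $ j * cone_fun c (euler_coeffs (J + 2) (euler_coeffs J b)) (J + 2 + 2) x t * x $ j)"
  proof -
    have "((\<lambda>s. (x + s *\<^sub>R axis j 1) $ j) has_real_derivative 1) (at 0)"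
      by (auto intro!: derivative_eq_intros)
    from DERIV_minus[OF DERIV_mult[OF this DERIV_cone_fun_space[OF c x entire_coeffs_euler_coeffs[OF b]]]]
    show ?thesis unfolding pd_def option.case by (intro DERIV_imp_deriv) simp
  qed
  finally show ?thesis by (simp add: algebra_simps power2_eq_square)
qed

definition kg_coeffs :: "nat \<Rightarrow> nat \<Rightarrow> (nat \<Rightarrow> real) \<Rightarrow> nat \<Rightarrow> real" where
  "kg_coeffs d J b n = (real n - real J) * (real n - real J + real d - 1) * b n"

lemma kg_coeffs_euler_coeffs:
  "kg_coeffs d J b = (\<lambda>n. (1 + real d) * euler_coeffs J b n + euler_coeffs (J + 2) (euler_coeffs J b) n)"
  by (simp add: fun_eq_iff kg_coeffs_def euler_coeffs_def algebra_simps)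

lemma entire_coeffs_kg_coeffs: "entire_coeffs b \<Longrightarrow> entire_coeffs (kg_coeffs d J b)"
  unfolding kg_coeffs_euler_coeffs by (intro entire_coeffs_lincomb entire_coeffs_euler_coeffs)

lemma sum_sq_vec_nth: "(\<Sum>j\<in>UNIV. (x $ j)\<^sup>2) = (norm (x :: real ^ 'n))\<^sup>2"
proof -
  have "(norm x)\<^sup>2 = (\<Sum>j\<in>UNIV. x $ j * x $ j)" by (simp add: dot_square_norm[symmetric] inner_vec_def)
  then show ?thesis by (simp add: power2_eq_square)
qed

lemma KG_cone_fun:
  fixes x :: "real ^ 'n"
  assumes c: "c > 0" and b: "entire_coeffs b" and x: "in_cone c x t"
  shows "KG c (cone_fun c b J) x t = c\<^sup>2 * cone_fun c (kg_coeffs CARD('n) J b) (J + 2) x t"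
proof -
  define Y where "Y = cone_radius c x t"
  define P1 where "P1 = cone_fun c (euler_coeffs J b) (J + 2) x t"
  define P2 where "P2 = cone_fun c (euler_coeffs (J + 2) (euler_coeffs J b)) (J + 2 + 2) x t"
  have Y: "Y > 0" and Y2: "c\<^sup>2 * t\<^sup>2 - (norm x)\<^sup>2 = Y\<^sup>2"
    using cone_radius_pos[OF c x] cone_radius_sq[OF c x] by (simp_all add: Y_def)
  have S: "(\<Sum>j\<in>UNIV. pd (Some j) (pd (Some j) (cone_fun c b J)) x t) = - real CARD('n) * P1 + (norm x)\<^sup>2 * P2"
    unfolding pd_space_space_cone_fun[OF c b x] P1_def[symmetric] P2_def[symmetric]
    by (simp add: sum_subtractf sum_distrib_right[symmetric] sum_sq_vec_nth)
  have "KG c (cone_fun c b J) x t = c\<^sup>2 * ((1 + real CARD('n)) * P1 + Y\<^sup>2 * P2)"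
    unfolding KG_def S pd_time_time_cone_fun[OF c b x] P1_def[symmetric] P2_def[symmetric] Y2[symmetric]
    by (simp add: algebra_simps)
  also have "(1 + real CARD('n)) * P1 + Y\<^sup>2 * P2
      = ((1 + real CARD('n)) * pseries (euler_coeffs J b) Y + pseries (euler_coeffs (J + 2) (euler_coeffs J b)) Y) / Y ^ (J + 2)"
    unfolding P1_def P2_def cone_fun_def Y_def[symmetric] using Y by (simp add: field_simps power2_eq_square)
  also have "\<dots> = cone_fun c (kg_coeffs CARD('n) J b) (J + 2) x t"
    unfolding kg_coeffs_euler_coeffs cone_fun_def Y_def
    by (simp add: pseries_lincomb entire_coeffs_euler_coeffs b)
  finally show ?thesis .
qed

fun kg_iter :: "real \<Rightarrow> nat \<Rightarrow> nat \<Rightarrow> (nat \<Rightarrow> real) \<Rightarrow> nat \<Rightarrow> nat \<Rightarrow> real" where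
  "kg_iter c d J b 0 = b"
| "kg_iter c d J b (Suc m) = (\<lambda>n. c\<^sup>2 * kg_coeffs d (J + 2 * m) (kg_iter c d J b m) n)"

lemma entire_coeffs_kg_iter: "entire_coeffs b \<Longrightarrow> entire_coeffs (kg_iter c d J b m)"
  by (induction m) (simp_all add: entire_coeffs_scale entire_coeffs_kg_coeffs)

lemma kg_iter_eq_prod:
  "kg_iter c d J b m n =
    (c\<^sup>2) ^ m * (\<Prod>i<m. (real n - real (J + 2 * i)) * (real n - real (J + 2 * i) + real d - 1)) * b n"
  by (induction m) (simp_all add: kg_coeffs_def algebra_simps)

lemma cone_fun_shift:
  assumes c: "c > 0" and b: "entire_coeffs b" and x: "in_cone c x t"
  shows "cone_fun c (\<lambda>n. if K \<le> n then a * b (n - K) else 0) (J + K) x t = a * cone_fun c b J x t"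
  using cone_radius_pos[OF c x] by (simp add: cone_fun_def pseries_shift[OF b] power_add)

lemma KG_pow_cone_fun:
  assumes c: "c > 0" and b: "entire_coeffs b"
  shows "eq_on_cone c ((KG c ^^ m) (cone_fun c b J :: real ^ 'n \<Rightarrow> real \<Rightarrow> real))
    (cone_fun c (kg_iter c CARD('n) J b m) (J + 2 * m))"
proof (induction m)
  case (Suc m)
  have "KG c (cone_fun c (kg_iter c CARD('n) J b m) (J + 2 * m)) x t
      = cone_fun c (kg_iter c CARD('n) J b (Suc m)) (J + 2 * Suc m) x t" if x: "in_cone c x t" for x :: "real ^ 'n" and t
    using KG_cone_fun[OF c entire_coeffs_kg_iter[OF b] x] pseries_scale[OF entire_coeffs_kg_coeffs[OF entire_coeffs_kg_iter[OF b]]]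
    by (simp add: cone_fun_def)
  with eq_on_cone_KG[OF Suc] show ?case by (simp add: eq_on_cone_def)
qed (simp add: eq_on_cone_def)

section \<open>The coefficients of the flight density\<close>

text \<open>Written with \<open>rGamma = 1/\<Gamma>\<close>, so that the coefficient vanishes at the poles of \<open>\<Gamma>\<close>
  (e.g. for \<open>j = 0\<close>); the computation of the iterated operator relies on this.\<close>
definition flight_coeff :: "real \<Rightarrow> real \<Rightarrow> nat \<Rightarrow> nat \<Rightarrow> real" where
  "flight_coeff c lam N j =
     (lam / (2 * c)) ^ (j * N) * rGamma (real j / 2 * real N) * rGamma (real N / 2 * (real j + 1))"

definition flight_coeffs :: "real \<Rightarrow> real \<Rightarrow> nat \<Rightarrow> nat \<Rightarrow> real" where
  "flight_coeffs c lam N n = (if N dvd n then flight_coeff c lam N (n div N) else 0)"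

lemma flight_coeff_0 [simp]: "flight_coeff c lam N 0 = 0"
  by (simp add: flight_coeff_def)

lemma summable_flight_coeff:
  assumes N: "N \<ge> 1"
  shows "summable (\<lambda>j. flight_coeff c lam N j * y ^ (j * N))"
proof -
  define Z where "Z = (lam / (2 * c) * y) ^ N"
  define R where "R = (\<lambda>j. rGamma (real j / 2 * real N) * rGamma (real N / 2 * (real j + 1)))"
  have "summable (\<lambda>k. Z ^ k * R (Suc k))"
  proof (rule summable_pow_mult_pochhammer_ratio[OF N, where g = "\<lambda>k. real (Suc k) / 2 * real N"])
    fix k
    show "real (Suc k) / 2 * real N \<ge> real k / 2"
      using N mult_left_mono[of 1 "real N" "real (Suc k) / 2"] by simp
    show "R (Suc k) > 0" using N by (simp add: R_def rGamma_inverse_Gamma)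
    have "real (Suc k) / 2 * real N + real N = real N / 2 * (real (Suc (Suc k)) + 1)"
      by (simp add: field_simps)
    with pochhammer_rGamma[of "real (Suc k) / 2 * real N" N]
    have "rGamma (real (Suc k) / 2 * real N)
        = pochhammer (real (Suc k) / 2 * real N) N * rGamma (real N / 2 * (real (Suc (Suc k)) + 1))"
      by (simp only: of_nat_id)
    then show "R (Suc k) = pochhammer (real (Suc k) / 2 * real N) N * R (Suc (Suc k))"
      by (simp add: R_def algebra_simps)
  qed
  then have "summable (\<lambda>k. Z ^ Suc k * R (Suc k))"
    using summable_mult[of _ Z] by (simp add: mult.assoc)
  then have "summable (\<lambda>j. Z ^ j * R j)" by (rule summable_Suc_iff[THEN iffD1])
  moreover have "Z ^ j * R j = flight_coeff c lam N j * y ^ (j * N)" for j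
  proof -
    have "Z ^ j = (lam / (2 * c)) ^ (j * N) * y ^ (j * N)"
      unfolding Z_def power_mult[symmetric] power_mult_distrib by (simp only: mult.commute)
    then show ?thesis by (simp add: R_def flight_coeff_def)
  qed
  ultimately show ?thesis by simp
qed

lemma sums_flight_coeff_iff:
  assumes N: "N \<ge> 1"
  shows "(\<lambda>j. flight_coeff c lam N j * y ^ (j * N)) sums s \<longleftrightarrow> (\<lambda>n. flight_coeffs c lam N n * y ^ n) sums s"
proof -
  have "strict_mono (\<lambda>j. j * N)" using N by (simp add: strict_mono_def)
  moreover have "flight_coeffs c lam N n * y ^ n = 0" if "n \<notin> range (\<lambda>j. j * N)" for n
    using that by (auto simp: flight_coeffs_def elim!: dvdE)
  moreover have "flight_coeffs c lam N (j * N) = flight_coeff c lam N j" for j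
    using N by (simp add: flight_coeffs_def)
  ultimately show ?thesis
    using sums_mono_reindex[of "\<lambda>j. j * N" "\<lambda>n. flight_coeffs c lam N n * y ^ n"] by simp
qed

lemma entire_coeffs_flight_coeffs: "N \<ge> 1 \<Longrightarrow> entire_coeffs (flight_coeffs c lam N)"
  unfolding entire_coeffs_def summable_def
  using summable_flight_coeff sums_flight_coeff_iff by (metis summable_def)

lemma sums_flight_coeff_pseries:
  "N \<ge> 1 \<Longrightarrow> (\<lambda>j. flight_coeff c lam N j * y ^ (j * N)) sums pseries (flight_coeffs c lam N) y"
  using sums_flight_coeff_iff sums_pseries entire_coeffs_flight_coeffs by blast

lemma prod_minus_even_pochhammer:
  "(\<Prod>i<n. 2 * x - real (2 + 2 * i)) = 2 ^ n * pochhammer (x - real n) n"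
proof (induction n)
  case (Suc n)
  have "(\<Prod>i<Suc n. 2 * x - real (2 + 2 * i)) = 2 ^ n * pochhammer (x - real n) n * (2 * x - real (2 + 2 * n))"
    by (simp only: prod.lessThan_Suc Suc.IH)
  also have "\<dots> = 2 ^ Suc n * ((x - real (Suc n)) * pochhammer (x - real n) n)"
    by (simp add: algebra_simps)
  also have "(x - real (Suc n)) * pochhammer (x - real n) n = pochhammer (x - real (Suc n)) (Suc n)"
    by (simp add: pochhammer_rec algebra_simps)
  finally show ?case .
qed simp

lemma prod_kg_factors_pochhammer:
  "(\<Prod>i<N. (y - real (2 + 2 * i)) * (y - real (2 + 2 * i) + real N))
    = 4 ^ N * pochhammer (y / 2 - real N) N * pochhammer ((y + real N) / 2 - real N) N"
proof -
  have "2 * ((y + real N) / 2) = y + real N" by simp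
  then have "(\<Prod>i<N. y - real (2 + 2 * i) + real N) = (\<Prod>i<N. 2 * ((y + real N) / 2) - real (2 + 2 * i))"
    by (simp only: algebra_simps)
  then show ?thesis
    using prod_minus_even_pochhammer[of "y / 2" N] prod_minus_even_pochhammer[of "(y + real N) / 2" N]
    by (simp add: prod.distrib power_mult_distrib[symmetric])
qed

lemma pochhammer_mult_flight_coeff:
  "pochhammer (real j / 2 * real N - real N) N * pochhammer (real N / 2 * (real j + 1) - real N) N
     * flight_coeff c lam N j
   = (lam / (2 * c)) ^ (2 * N) * (if 2 \<le> j then flight_coeff c lam N (j - 2) else 0)"
proof -
  define a where "a = real j / 2 * real N - real N"
  define b where "b = real N / 2 * (real j + 1) - real N"
  have "flight_coeff c lam N j = (lam / (2 * c)) ^ (j * N) * rGamma (a + real N) * rGamma (b + real N)"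
    by (simp add: flight_coeff_def a_def b_def)
  then have lhs: "pochhammer a N * pochhammer b N * flight_coeff c lam N j
      = (lam / (2 * c)) ^ (j * N) * rGamma a * rGamma b"
    using pochhammer_rGamma[of a N] pochhammer_rGamma[of b N] by simp
  show ?thesis
    unfolding a_def[symmetric] b_def[symmetric] lhs
  proof (cases "2 \<le> j")
    case True
    then obtain i where j: "j = i + 2" by (metis add.commute le_Suc_ex)
    have ab: "a = real i / 2 * real N" "b = real N / 2 * (real i + 1)"
      by (simp_all add: a_def b_def j field_simps)
    moreover have "j * N = 2 * N + i * N" by (simp add: j algebra_simps)
    then have "(lam / (2 * c)) ^ (j * N) = (lam / (2 * c)) ^ (2 * N) * (lam / (2 * c)) ^ (i * N)"
      by (simp only: power_add)
    ultimately show "(lam / (2 * c)) ^ (j * N) * rGamma a * rGamma b =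
        (lam / (2 * c)) ^ (2 * N) * (if 2 \<le> j then flight_coeff c lam N (j - 2) else 0)"
      using True unfolding ab by (simp add: j flight_coeff_def mult_ac)
  next
    case False
    then have "j = 0 \<or> j = 1" by auto
    then have "rGamma a * rGamma b = 0"
      by (auto simp: a_def b_def rGamma_eq_zero_iff)
    then show "(lam / (2 * c)) ^ (j * N) * rGamma a * rGamma b =
        (lam / (2 * c)) ^ (2 * N) * (if 2 \<le> j then flight_coeff c lam N (j - 2) else 0)"
      using False by simp
  qed
qed

lemma kg_iter_eq_pochhammer:
  "kg_iter c (Suc N) 2 b N k = (c\<^sup>2) ^ N * 4 ^ N
    * pochhammer (real k / 2 - real N) N * pochhammer ((real k + real N) / 2 - real N) N * b k"
proof -
  have "(\<Prod>i<N. (real k - real (2 + 2 * i)) * (real k - real (2 + 2 * i) + real (Suc N) - 1))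
      = (\<Prod>i<N. (real k - real (2 + 2 * i)) * (real k - real (2 + 2 * i) + real N))"
    by (intro prod.cong) (simp_all add: algebra_simps)
  then show ?thesis by (simp only: kg_iter_eq_prod prod_kg_factors_pochhammer mult.assoc)
qed

lemma kg_iter_flight_coeffs:
  assumes N: "N \<ge> 1" and c: "c > 0"
  shows "kg_iter c (Suc N) 2 (flight_coeffs c lam N) N k =
    (if 2 * N \<le> k then lam ^ (2 * N) * flight_coeffs c lam N (k - 2 * N) else 0)"
proof (cases "N dvd k")
  case False
  then have "\<not> N dvd (k - 2 * N)" if "2 * N \<le> k"
    using that dvd_diffD[of N k "2 * N"] by auto
  then show ?thesis using False by (simp add: kg_iter_eq_pochhammer flight_coeffs_def)
next
  case True
  then obtain j where "k = N * j" by (rule dvdE)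
  then have k: "k = j * N" by simp
  have ab: "real k / 2 - real N = real j / 2 * real N - real N"
    "(real k + real N) / 2 - real N = real N / 2 * (real j + 1) - real N"
    by (simp_all add: k field_simps)
  have "flight_coeffs c lam N k = flight_coeff c lam N j"
    using N by (simp add: k flight_coeffs_def)
  then have "kg_iter c (Suc N) 2 (flight_coeffs c lam N) N k = (c\<^sup>2) ^ N * 4 ^ N
      * (pochhammer (real j / 2 * real N - real N) N * pochhammer (real N / 2 * (real j + 1) - real N) N
         * flight_coeff c lam N j)"
    unfolding kg_iter_eq_pochhammer ab by (simp only: mult.assoc)
  also have "\<dots> = (c\<^sup>2 * 4 * (lam / (2 * c))\<^sup>2) ^ N * (if 2 \<le> j then flight_coeff c lam N (j - 2) else 0)"
    unfolding pochhammer_mult_flight_coeff by (simp only: power_mult power_mult_distrib mult.assoc)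
  also have "c\<^sup>2 * 4 * (lam / (2 * c))\<^sup>2 = lam\<^sup>2"
    using c by (simp add: field_simps power2_eq_square)
  moreover have "2 * N \<le> k \<longleftrightarrow> 2 \<le> j" using N by (simp add: k)
  moreover have "flight_coeffs c lam N (k - 2 * N) = flight_coeff c lam N (j - 2)" if "2 \<le> j"
    using N that by (simp add: k flight_coeffs_def diff_mult_distrib[symmetric])
  ultimately show ?thesis by (simp add: power_mult)
qed

lemma KG_pow_flight_cone_fun:
  fixes x :: "real ^ 'n"
  assumes N: "N \<ge> 1" "CARD('n) = Suc N" and c: "c > 0" and x: "in_cone c x t"
  shows "(KG c ^^ N) (cone_fun c (flight_coeffs c lam N) 2) x t = lam ^ (2 * N) * cone_fun c (flight_coeffs c lam N) 2 x t"
proof -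
  have B: "entire_coeffs (flight_coeffs c lam N)" by (rule entire_coeffs_flight_coeffs[OF N(1)])
  have "(KG c ^^ N) (cone_fun c (flight_coeffs c lam N) 2) x t
      = cone_fun c (kg_iter c CARD('n) 2 (flight_coeffs c lam N) N) (2 + 2 * N) x t"
    using KG_pow_cone_fun[OF c B, of N 2, where 'n = 'n] x by (simp add: eq_on_cone_def)
  also have "kg_iter c CARD('n) 2 (flight_coeffs c lam N) N
      = (\<lambda>k. if 2 * N \<le> k then lam ^ (2 * N) * flight_coeffs c lam N (k - 2 * N) else 0)"
    by (simp add: fun_eq_iff N(2) kg_iter_flight_coeffs[OF N(1) c])
  also have "cone_fun c \<dots> (2 + 2 * N) x t = lam ^ (2 * N) * cone_fun c (flight_coeffs c lam N) 2 x t"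
    by (rule cone_fun_shift[OF c B x])
  finally show ?thesis .
qed

section \<open>The density as a function of the cone radius\<close>

lemma summable_ML2_series:
  assumes N: "N \<ge> 1"
  shows "summable (\<lambda>k. X ^ k / Gamma (real N * real k + real N))"
proof -
  have "summable (\<lambda>k. X ^ k * rGamma (real N * real k + real N))"
  proof (rule summable_pow_mult_pochhammer_ratio[OF N, where g = "\<lambda>k. real N * real k + real N"])
    fix k
    show "real N * real k + real N \<ge> real k / 2"
      using N mult_right_mono[of 1 "real N" "real k"] by simp
    show "rGamma (real N * real k + real N) > 0"
      using N by (simp add: rGamma_inverse_Gamma add_nonneg_pos)
    have "real N * real (Suc k) + real N = (real N * real k + real N) + real N"
      by (simp add: algebra_simps)
    with pochhammer_rGamma[of "real N * real k + real N" N]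
    show "rGamma (real N * real k + real N)
        = pochhammer (real N * real k + real N) N * rGamma (real N * real (Suc k) + real N)"
      by (simp only: of_nat_id)
  qed
  then show ?thesis by (simp add: rGamma_inverse_Gamma divide_inverse)
qed

lemma ML2_pos: "N \<ge> 1 \<Longrightarrow> X > 0 \<Longrightarrow> ML2 (real N) (real N) X > 0"
  unfolding ML2_def
  by (intro suminf_pos summable_ML2_series) (simp_all add: add_nonneg_pos)

lemma MLd_eq_ML2:
  assumes N: "N \<ge> 1"
  shows "MLd (Suc N) (X / 2 ^ N) = 2 ^ (N - 1) / sqrt pi * ML2 (real N) (real N) X"
proof -
  have summand: "(X / 2 ^ N) ^ k / (Gamma ((real k + 1) / 2 * real N + 1/2) * Gamma (real N / 2 * (real k + 1)))
      = 2 ^ (N - 1) / sqrt pi * (X ^ k / Gamma (real N * real k + real N))" for k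
  proof -
    define M where "M = Suc k * N"
    have "M \<ge> 1" using N by (simp add: M_def)
    from Gamma_half_nat_duplication[OF this]
    have "Gamma ((real k + 1) / 2 * real N + 1/2) * Gamma (real N / 2 * (real k + 1))
        = sqrt pi * Gamma (real N * real k + real N) / 2 ^ (k * N + (N - 1))"
      using N by (simp add: M_def algebra_simps)
    moreover have "Gamma (real N * real k + real N) > 0" using N by (simp add: add_nonneg_pos)
    ultimately show ?thesis
      by (simp add: power_divide power_add power_mult[symmetric] mult.commute)
  qed
  have dN: "real (Suc N) - 1 = real N" by simp
  have "MLd (Suc N) (X / 2 ^ N) = (\<Sum>k. 2 ^ (N - 1) / sqrt pi * (X ^ k / Gamma (real N * real k + real N)))"
    unfolding MLd_def dN unfolding summand ..
  also have "\<dots> = 2 ^ (N - 1) / sqrt pi * ML2 (real N) (real N) X"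
    unfolding ML2_def by (rule suminf_mult[OF summable_ML2_series[OF N]])
  finally show ?thesis .
qed

definition flight_term :: "nat \<Rightarrow> real \<Rightarrow> real \<Rightarrow> real ^ 'n \<Rightarrow> real \<Rightarrow> nat \<Rightarrow> real" where
  "flight_term d c lam x t k =
     (lam / (2 * c)) ^ (Suc k * (d - 1))
     * (c\<^sup>2 * t\<^sup>2 - (norm x)\<^sup>2) powr (real (Suc k) / 2 * (real d - 1) - 1)
     / (Gamma (real (Suc k) / 2 * (real d - 1)) * Gamma ((real d - 1) / 2 * (real (Suc k) + 1)))"

lemma flight_term_eq_density:
  fixes x :: "real ^ 'n"
  assumes N: "N \<ge> 1" and c: "c > 0" and lam: "lam > 0" and t: "t > 0"
  shows "flight_term (Suc N) c lam x t k =
    pi powr (real (Suc N) / 2) * (c * t) ^ (N - 1) * MLd (Suc N) ((lam * t / 2) ^ N)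
      * (pcond (Suc N) c x t (Suc k) * probN (Suc N) lam t (Suc k))"
proof -
  define K where "K = Suc k * N"
  define E where "E = ML2 (real N) (real N) ((lam * t) ^ N)"
  define S where "S = (c\<^sup>2 * t\<^sup>2 - (norm x)\<^sup>2) powr (real (Suc k) / 2 * real N - 1)"
  define G1 where "G1 = Gamma (real (Suc k) / 2 * real N)"
  define G2 where "G2 = Gamma (real N / 2 * (real (Suc k) + 1))"
  define GM where "GM = Gamma (real (K + N))"
  have pos: "E > 0" "G1 > 0" "G2 > 0" "GM > 0"
    using N lam t by (simp_all add: E_def G1_def G2_def GM_def ML2_pos Gamma_real_pos)
  have "K + N \<ge> 1" using N by simp
  from Gamma_half_nat_duplication[OF this]
  have dup: "Gamma ((real (Suc k) + 1) / 2 * real N + 1/2) = sqrt pi * GM / (2 ^ (N - 1) * 2 ^ K * G2)"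
    using pos N by (simp add: G2_def GM_def K_def field_simps power_add[symmetric])
  have MLd_E: "MLd (Suc N) ((lam * t / 2) ^ N) = 2 ^ (N - 1) / sqrt pi * E"
    using MLd_eq_ML2[OF N, of "(lam * t) ^ N"] by (simp add: E_def power_divide)
  have pc: "pcond (Suc N) c x t (Suc k) = sqrt pi * GM / (2 ^ (N - 1) * 2 ^ K * G2) / G1 * S
      / (pi powr (real (Suc N) / 2) * ((c * t) ^ (N - 1) * (c * t) ^ K))"
  proof -
    have dN: "real (Suc N) - 1 = real N" by simp
    have "(Suc k + 1) * (Suc N - 1) - 1 = (N - 1) + K" using N by (simp add: K_def)
    then show ?thesis
      unfolding pcond_def dN dup G1_def[symmetric] S_def[symmetric] by (simp add: power_add)
  qed
  have pN: "probN (Suc N) lam t (Suc k) = (lam * t) ^ K / GM / E"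
    by (simp add: probN_def E_def GM_def K_def algebra_simps)
  have "flight_term (Suc N) c lam x t k = (lam / (2 * c)) ^ K * S / (G1 * G2)"
    by (simp add: flight_term_def K_def S_def G1_def G2_def)
  also have "\<dots> = pi powr (real (Suc N) / 2) * (c * t) ^ (N - 1) * (2 ^ (N - 1) / sqrt pi * E)
      * (sqrt pi * GM / (2 ^ (N - 1) * 2 ^ K * G2) / G1 * S
          / (pi powr (real (Suc N) / 2) * ((c * t) ^ (N - 1) * (c * t) ^ K))
         * ((lam * t) ^ K / GM / E))"
    using pos c t by (simp add: power_divide power_mult_distrib field_simps)
  finally show ?thesis unfolding MLd_E pc pN .
qed

lemma powr_sq_half_minus_one:
  assumes y: "y > 0"
  shows "(y\<^sup>2) powr (real M / 2 - 1) = y ^ M / y\<^sup>2"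
proof -
  have y2: "y\<^sup>2 = y powr 2" using powr_realpow[OF y, of 2] by simp
  have "(y\<^sup>2) powr (real M / 2 - 1) = y powr (real M - 2)"
    unfolding y2 powr_powr by (simp add: algebra_simps)
  also have "\<dots> = y ^ M / y\<^sup>2"
    unfolding powr_diff y2 using powr_realpow[OF y, of M] by simp
  finally show ?thesis .
qed

lemma flight_term_cone_radius:
  assumes N: "N \<ge> 1" and c: "c > 0" and x: "in_cone c x t"
  shows "flight_term (Suc N) c lam x t k
    = flight_coeff c lam N (Suc k) * cone_radius c x t ^ (Suc k * N) / (cone_radius c x t)\<^sup>2"
proof -
  define Y where "Y = cone_radius c x t"
  have "(c\<^sup>2 * t\<^sup>2 - (norm x)\<^sup>2) powr (real (Suc k) / 2 * (real (Suc N) - 1) - 1) = Y ^ (Suc k * N) / Y\<^sup>2"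
    unfolding cone_radius_sq[OF c x, symmetric] Y_def[symmetric]
    using powr_sq_half_minus_one[OF cone_radius_pos[OF c x], of "Suc k * N"]
    by (simp add: Y_def algebra_simps)
  moreover have "Gamma (real (Suc k) / 2 * real N) > 0" "Gamma (real N / 2 * (real (Suc k) + 1)) > 0"
    using N by simp_all
  ultimately show ?thesis
    unfolding flight_term_def flight_coeff_def Y_def[symmetric]
    by (simp add: rGamma_inverse_Gamma field_simps)
qed

lemma sums_flight_term:
  assumes N: "N \<ge> 1" and c: "c > 0" and x: "in_cone c x t"
  shows "(\<lambda>k. flight_term (Suc N) c lam x t k) sums cone_fun c (flight_coeffs c lam N) 2 x t"
proof -
  define Y where "Y = cone_radius c x t"
  have "(\<lambda>k. flight_coeff c lam N (Suc k) * Y ^ (Suc k * N)) sums pseries (flight_coeffs c lam N) Y"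
    using sums_flight_coeff_pseries[OF N] sums_Suc_iff by fastforce
  from sums_divide[OF this, of "Y\<^sup>2"] show ?thesis
    unfolding flight_term_cone_radius[OF N c x] cone_fun_def Y_def by simp
qed

lemma normalized_density_eq_cone_fun:
  fixes x :: "real ^ 'n"
  assumes N: "N \<ge> 1" and c: "c > 0" and lam: "lam > 0" and x: "in_cone c x t"
  shows "pi powr (real (Suc N) / 2) * (c * t) ^ (N - 1) * MLd (Suc N) ((lam * t / 2) ^ N)
      * pX (Suc N) c lam x t = cone_fun c (flight_coeffs c lam N) 2 x t"
proof -
  define C where "C = pi powr (real (Suc N) / 2) * (c * t) ^ (N - 1) * MLd (Suc N) ((lam * t / 2) ^ N)"
  have t: "t > 0" using x by (simp add: in_cone_def)
  have "MLd (Suc N) ((lam * t / 2) ^ N) > 0"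
    using MLd_eq_ML2[OF N, of "(lam * t) ^ N"] ML2_pos[OF N, of "(lam * t) ^ N"] lam t
    by (simp add: power_divide)
  then have C: "C > 0" using c t by (simp add: C_def)
  have "(\<lambda>k. flight_term (Suc N) c lam x t k / C) sums (cone_fun c (flight_coeffs c lam N) 2 x t / C)"
    by (intro sums_divide sums_flight_term N c x)
  moreover have "(\<lambda>k. flight_term (Suc N) c lam x t k / C)
      = (\<lambda>k. pcond (Suc N) c x t (Suc k) * probN (Suc N) lam t (Suc k))"
  proof -
    have "flight_term (Suc N) c lam x t k = C * (pcond (Suc N) c x t (Suc k) * probN (Suc N) lam t (Suc k))" for k
      unfolding C_def by (rule flight_term_eq_density[OF N c lam t])
    then show ?thesis using C by simp
  qed
  ultimately have "(\<lambda>k. pcond (Suc N) c x t (Suc k) * probN (Suc N) lam t (Suc k))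
      sums (cone_fun c (flight_coeffs c lam N) 2 x t / C)"
    by simp
  then show ?thesis using C unfolding pX_def C_def[symmetric] by (simp add: sums_iff)
qed

theorem theorem3p1:
  fixes c lam :: real
  assumes d2: "CARD('n::finite) \<ge> 2"
    and c: "c > 0" and lam: "lam > 0"
  defines "d \<equiv> CARD('n)"
  defines "f \<equiv> (\<lambda>(x::real^'n) t. pi powr (real d / 2) * (c * t) ^ (d - 2)
                   * MLd d ((lam * t / 2) ^ (d - 1)) * pX d c lam x t)"
  shows "(\<forall>x t. t > 0 \<and> norm x < c * t \<longrightarrow>
            (\<lambda>k. (lam / (2 * c)) ^ (Suc k * (d - 1))
                  * (c\<^sup>2 * t\<^sup>2 - (norm x)\<^sup>2) powr (real (Suc k) / 2 * (real d - 1) - 1)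
                  / (Gamma (real (Suc k) / 2 * (real d - 1)) * Gamma ((real d - 1) / 2 * (real (Suc k) + 1))))
            sums f x t)
       \<and> (\<forall>ds :: 'n option list. \<forall>dir x t. t > 0 \<and> norm x < c * t \<longrightarrow>
            pdiff dir (foldr pd ds f) x t)
       \<and> (\<forall>x t. t > 0 \<and> norm x < c * t \<longrightarrow>
            ((KG c) ^^ (d - 1)) f x t = lam ^ (2 * (d - 1)) * f x t)"
proof -
  define N where "N = d - 1"
  have N: "N \<ge> 1" and d: "d = Suc N" using d2 by (simp_all add: N_def d_def)
  define B where "B = flight_coeffs c lam N"
  have B: "entire_coeffs B" unfolding B_def by (rule entire_coeffs_flight_coeffs[OF N])
  have f: "eq_on_cone c f (cone_fun c B 2)"
    unfolding eq_on_cone_def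
  proof (intro allI impI)
    fix x :: "real ^ 'n" and t assume "in_cone c x t"
    from normalized_density_eq_cone_fun[OF N c lam this]
    show "f x t = cone_fun c B 2 x t" by (simp add: f_def B_def d)
  qed
  have KG_f: "((KG c) ^^ N) f x t = lam ^ (2 * N) * f x t" if x: "in_cone c x t" for x t
    using eq_on_cone_KG_pow[OF f, of N] KG_pow_flight_cone_fun[OF N d[unfolded d_def] c x, of lam] f x
    by (simp add: eq_on_cone_def B_def)
  have series: "(\<lambda>k. flight_term d c lam x t k) sums f x t" if x: "in_cone c x t" for x t
    using sums_flight_term[OF N c x, of lam] f x unfolding d[symmetric] B_def[symmetric] eq_on_cone_def by simp
  show ?thesis
    using series KG_f pdiff_iterated_pd[OF c cone_algebra.cone_fun[OF B] f]
    unfolding flight_term_def in_cone_def N_def by blast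
qed

end
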